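(* Let $x=\tilde w\ell$ with $\tilde w\in\widetilde W$ satisfying $\tilde w\alpha>0$ for all $\alpha\in\Delta(L)$ and $\ell=wu$ with $w\in W_L$, $u\in\Upsilon$. Then $$B_\phi\cap x^{-1}I^-x=B_\phi\cap\ell^{-1}B_L^-\ell=\{tv\in T_\phi U_\phi:\ (t^{-1}ut)vu^{-1}\in U_L\cap w^{-1}U_L^-w\}.$$
   Context: $k$ a field, $G=\mathrm{GL}_n$; $I^-=\{g\in\mathrm{GL}_n(k[s^{-1}]):g|_{s^{-1}=0}\text{ lower triangular}\}$, $I\subset\mathrm{GL}_n(k[[s]])$ preimage of upper triangular matrices; affine roots $\alpha_{ij}+r$ with root subgroups $\{1+as^rE_{ij}\}$, positive if contained in $I$; $\widetilde W$ = monomial matrices $w\,\mathrm{diag}(s^{\lambda_i})$. Fix $1\le d\le n$, $m=n-d$. $L\subset\mathrm{GL}_n(k((s)))$ is generated by the diagonal torus $T(k)$ and $\{1+as^{(i-j)/d}E_{ij}\}$ for $i\equiv j\bmod d$, $i\neq j$; $L\simeq G_0=\{g\in\mathrm{GL}_n(k):g_{ij}=0\text{ unless }i\equiv j\bmod d\}$ via $s^{(i-j)/d}E_{ij}\mapsto E_{ij}$. $\Delta(L)=\{\alpha_{i,i+d}-1\}$; $W_L$ the Weyl group of $L$ (its permutation matrices); $U_L$ (resp. $U_L^-$) generated by the root subgroups of $L$ with $i<j$ (resp. $i>j$); $B_L^-=T(k)U_L^-$. $B_\phi\subset L$ corresponds to $\{\mathrm{diag}(\mathrm{Id}_d,b):b\in\mathrm{GL}_m\text{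 upper triangular}\}\cap G_0$, with torus $T_\phi$ and unipotent radical $U_\phi$. $\Upsilon=\prod U_\alpha$ over the root subgroups of $L$ with finite part $\alpha_{ij}$, $1\le i\le d$, $i+d\le j\le n$, $j\equiv i\bmod d$. *)

theory Defs
  imports "Jordan_Normal_Form.Matrix" "HOL-Computational_Algebra.Formal_Laurent_Series"
    "HOL-Combinatorics.Permutations"
begin

text \<open>Conventions: k is a field of type 'a; matrices are n x n matrices over the
  Laurent series field k((s)) = 'a fls; indices are 0-based (paper index i corresponds to i-1).\<close>

definition sp :: "int \<Rightarrow> 'a::field fls" where
  "sp r = fls_X_intpow r"

definition minv :: "nat \<Rightarrow> 'a::field fls mat \<Rightarrow> 'a fls mat" where
  "minv n A = (SOME B. B \<in> carrier_mat n n \<and> A * B = 1\<^sub>m n \<and> B * A = 1\<^sub>m n)"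

definition conj_set :: "nat \<Rightarrow> 'a::field fls mat \<Rightarrow> 'a fls mat set \<Rightarrow> 'a fls mat set" where
  "conj_set n x S = {x * g * minv n x | g. g \<in> S}"

text \<open>Root subgroup of the affine root alpha_ij + r : {1 + a s^r E_ij}.\<close>
definition root_elem :: "nat \<Rightarrow> nat \<Rightarrow> nat \<Rightarrow> int \<Rightarrow> 'a::field \<Rightarrow> 'a fls mat" where
  "root_elem n i j r a = mat n n (\<lambda>(p,q). (if p = q then 1 else 0)
      + (if p = i \<and> q = j then fls_const a * sp r else 0))"

definition root_sub :: "nat \<Rightarrow> nat \<Rightarrow> nat \<Rightarrow> int \<Rightarrow> 'a::field fls mat set" where
  "root_sub n i j r = {root_elem n i j r a | a. True}"

definition in_kinv :: "'a::field fls \<Rightarrow> bool" where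
  "in_kinv f \<longleftrightarrow> (\<forall>m>0. fls_nth f m = 0)"

definition in_kpow :: "'a::field fls \<Rightarrow> bool" where
  "in_kpow f \<longleftrightarrow> (\<forall>m<0. fls_nth f m = 0)"

definition GL_R :: "nat \<Rightarrow> ('a::field fls \<Rightarrow> bool) \<Rightarrow> 'a fls mat set" where
  "GL_R n R = {g \<in> carrier_mat n n. (\<forall>i<n. \<forall>j<n. R (g $$ (i,j))) \<and>
     (\<exists>h \<in> carrier_mat n n. (\<forall>i<n. \<forall>j<n. R (h $$ (i,j))) \<and> g * h = 1\<^sub>m n \<and> h * g = 1\<^sub>m n)}"

text \<open>I^-: elements of GL_n(k[s^{-1}]) whose value at s^{-1}=0 (constant term) is lower triangular.\<close>
definition Iminus :: "nat \<Rightarrow> 'a::field fls mat set" where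
  "Iminus n = {g \<in> GL_R n in_kinv. \<forall>i<n. \<forall>j<n. i < j \<longrightarrow> fls_nth (g $$ (i,j)) 0 = 0}"

text \<open>I: preimage in GL_n(k[[s]]) of the upper triangular matrices under s = 0.\<close>
definition Iwah :: "nat \<Rightarrow> 'a::field fls mat set" where
  "Iwah n = {g \<in> GL_R n in_kpow. \<forall>i<n. \<forall>j<n. j < i \<longrightarrow> fls_nth (g $$ (i,j)) 0 = 0}"

definition perm_mat :: "nat \<Rightarrow> (nat \<Rightarrow> nat) \<Rightarrow> 'b::{zero,one} mat" where
  "perm_mat n \<sigma> = mat n n (\<lambda>(i,j). if i = \<sigma> j then 1 else 0)"

definition diag_s :: "nat \<Rightarrow> (nat \<Rightarrow> int) \<Rightarrow> 'a::field fls mat" where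
  "diag_s n lam = mat n n (\<lambda>(i,j). if i = j then sp (lam i) else 0)"

definition Wtil :: "nat \<Rightarrow> 'a::field fls mat set" where
  "Wtil n = {perm_mat n \<sigma> * diag_s n lam | \<sigma> lam. \<sigma> permutes {..<n}}"

text \<open>An affine root alpha is positive if its root subgroup lies in I; w~ alpha is the
  affine root whose root subgroup is w~ U_alpha w~^{-1}.\<close>
definition aff_pos_after :: "nat \<Rightarrow> 'a::field fls mat \<Rightarrow> nat \<Rightarrow> nat \<Rightarrow> int \<Rightarrow> bool" where
  "aff_pos_after n wt i j r \<longleftrightarrow> conj_set n wt (root_sub n i j r) \<subseteq> Iwah n"

definition G0 :: "nat \<Rightarrow> nat \<Rightarrow> 'a::field mat set" where
  "G0 n d = {c \<in> carrier_mat n n. invertible_mat c \<and>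
      (\<forall>i<n. \<forall>j<n. i mod d \<noteq> j mod d \<longrightarrow> c $$ (i,j) = 0)}"

definition iota :: "nat \<Rightarrow> nat \<Rightarrow> 'a::field mat \<Rightarrow> 'a fls mat" where
  "iota n d c = mat n n (\<lambda>(i,j). if i mod d = j mod d
      then fls_const (c $$ (i,j)) * sp ((int i - int j) div int d) else 0)"

definition Lgrp :: "nat \<Rightarrow> nat \<Rightarrow> 'a::field fls mat set" where
  "Lgrp n d = iota n d ` G0 n d"

definition Tk :: "nat \<Rightarrow> 'a::field fls mat set" where
  "Tk n = {mat n n (\<lambda>(i,j). if i = j then fls_const (t i) else 0) | t. \<forall>i<n. t i \<noteq> 0}"

definition UL :: "nat \<Rightarrow> nat \<Rightarrow> 'a::field fls mat set" where
  "UL n d = iota n d ` {c \<in> G0 n d. \<forall>i<n. \<forall>j<n. (i = j \<longrightarrow> c $$ (i,j) = 1) \<and> (j < i \<longrightarrow> c $$ (i,j) = 0)}"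

definition ULm :: "nat \<Rightarrow> nat \<Rightarrow> 'a::field fls mat set" where
  "ULm n d = iota n d ` {c \<in> G0 n d. \<forall>i<n. \<forall>j<n. (i = j \<longrightarrow> c $$ (i,j) = 1) \<and> (i < j \<longrightarrow> c $$ (i,j) = 0)}"

definition BLm :: "nat \<Rightarrow> nat \<Rightarrow> 'a::field fls mat set" where
  "BLm n d = {t * v | t v. t \<in> Tk n \<and> v \<in> ULm n d}"

definition WL :: "nat \<Rightarrow> nat \<Rightarrow> 'a::field fls mat set" where
  "WL n d = iota n d ` ({perm_mat n \<sigma> | \<sigma>. \<sigma> permutes {..<n}} \<inter> G0 n d)"

text \<open>B_phi corresponds to {diag(Id_d, b) : b upper triangular in GL_m} \<inter> G_0.\<close>
definition Bphi0 :: "nat \<Rightarrow> nat \<Rightarrow> 'a::field mat set" where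
  "Bphi0 n d = {c \<in> G0 n d. \<forall>i<n. \<forall>j<n.
      ((i < d \<or> j < d) \<longrightarrow> c $$ (i,j) = (if i = j then 1 else 0)) \<and> (j < i \<longrightarrow> c $$ (i,j) = 0)}"

definition Bphi :: "nat \<Rightarrow> nat \<Rightarrow> 'a::field fls mat set" where
  "Bphi n d = iota n d ` Bphi0 n d"

definition Tphi :: "nat \<Rightarrow> nat \<Rightarrow> 'a::field fls mat set" where
  "Tphi n d = iota n d ` {c \<in> Bphi0 n d. \<forall>i<n. \<forall>j<n. i \<noteq> j \<longrightarrow> c $$ (i,j) = 0}"

definition Uphi :: "nat \<Rightarrow> nat \<Rightarrow> 'a::field fls mat set" where
  "Uphi n d = iota n d ` {c \<in> Bphi0 n d. \<forall>i<n. c $$ (i,i) = 1}"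

text \<open>Upsilon: product of the root subgroups of L with finite part alpha_ij,
  1 \<le> i \<le> d, i+d \<le> j \<le> n, j = i mod d (0-based: i < d). These subgroups pairwise
  commute and multiply to the set below.\<close>
definition Ups :: "nat \<Rightarrow> nat \<Rightarrow> 'a::field fls mat set" where
  "Ups n d = iota n d ` {c \<in> carrier_mat n n. \<forall>i<n. \<forall>j<n.
      (i = j \<longrightarrow> c $$ (i,j) = 1) \<and>
      (i \<noteq> j \<and> c $$ (i,j) \<noteq> 0 \<longrightarrow> i < d \<and> i + d \<le> j \<and> i mod d = j mod d)}"

end

theory Submission
  imports Defs "Jordan_Normal_Form.Determinant"
begin

text \<open>
  An element of L is iota M for a block matrix M over k, with entry M(a,b) s^(a div d - b div d)
  at (a,b). Conjugation by wt = P_sigma diag(s^lam) moves this entry to (sigma a, sigma b) and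
  shifts the exponent by lam a - lam b. Positivity of wt on Delta(L), chained along
  a, a + d, a + 2d, ..., says that for a < b in one residue class the new exponent is positive,
  or zero with sigma a < sigma b. Hence wt iota(M) wt^-1 lies in I^- exactly when M is lower
  triangular: L \<inter> wt^-1 I^- wt = B_L^-, and conjugating by l \<in> L gives the first equality.
  For the second, z = t v \<in> B_phi gives l z l^-1 = w t Y w^-1 with Y = (t^-1 u t) v u^-1 in U_L;
  since conjugation by the permutation w keeps the diagonal torus diagonal, this lies in B_L^-
  iff w Y w^-1 \<in> U_L^-.
\<close>

section \<open>Laurent monomials and inverse pairs\<close>

lemma sp_mult: "(sp a :: 'a::field fls) * sp b = sp (a + b)"
  unfolding sp_def by (simp add: fls_X_intpow_times_fls_X_intpow)

lemma sp_0[simp]: "sp 0 = 1"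
  unfolding sp_def by simp

lemma fls_nth_sp: "fls_nth (sp r :: 'a::field fls) m = (if m = r then 1 else 0)"
  unfolding sp_def by simp

lemma fls_nth_const_mult_sp:
  "fls_nth (fls_const c * (sp r :: 'a::field fls)) m = (if m = r then c else 0)"
  unfolding sp_def by (simp add: fls_X_intpow_times_conv_shift)

lemma index_mult_mat_sum:
  assumes "A \<in> carrier_mat n n" "B \<in> carrier_mat n n" "i < n" "j < n"
  shows "(A * B) $$ (i,j) = (\<Sum>k<n. A $$ (i,k) * B $$ (k,j))"
  using assms by (auto simp: scalar_prod_def atLeast0LessThan intro!: sum.cong)

definition inv_pair :: "nat \<Rightarrow> 'b::semiring_1 mat \<Rightarrow> 'b mat \<Rightarrow> bool" where
  "inv_pair n A B \<longleftrightarrow> A \<in> carrier_mat n n \<and> B \<in> carrier_mat n n \<and> A * B = 1\<^sub>m n \<and> B * A = 1\<^sub>m n"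

lemma inv_pair_sym: "inv_pair n A B \<Longrightarrow> inv_pair n B A"
  unfolding inv_pair_def by auto

lemma inv_pair_mult:
  assumes "inv_pair n A B" "inv_pair n C D"
  shows "inv_pair n (A * C) (D * B)"
proof -
  have c: "A \<in> carrier_mat n n" "B \<in> carrier_mat n n" "C \<in> carrier_mat n n" "D \<in> carrier_mat n n"
    using assms unfolding inv_pair_def by auto
  have "A * C * (D * B) = A * (C * D) * B" "D * B * (A * C) = D * (B * A) * C"
    using c by (simp_all add: assoc_mult_mat[of _ n n _ n _ n])
  then show ?thesis using assms c unfolding inv_pair_def by simp
qed

lemma invertible_mat_iff_inv_pair:
  assumes A: "A \<in> carrier_mat n n"
  shows "invertible_mat A \<longleftrightarrow> (\<exists>B. inv_pair n A B)"
proof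
  assume "invertible_mat A"
  then obtain B where AB: "A * B = 1\<^sub>m n" "B * A = 1\<^sub>m (dim_row B)"
    unfolding invertible_mat_def inverts_mat_def using A by auto
  have "dim_col B = n" using arg_cong[OF AB(1), of dim_col] by simp
  moreover have "dim_row B = n" using arg_cong[OF AB(2), of dim_col] A by simp
  ultimately show "\<exists>B. inv_pair n A B" using AB A unfolding inv_pair_def by auto
qed (use A in \<open>auto simp: inv_pair_def invertible_mat_def inverts_mat_def\<close>)

lemma inv_pair_if_det_nonzero:
  fixes A :: "'b::field mat"
  assumes A: "A \<in> carrier_mat n n" and "det A \<noteq> 0"
  shows "\<exists>B. inv_pair n A B"
proof -
  have "A \<in> Units (ring_mat TYPE('b) n undefined)" by (rule det_non_zero_imp_unit[OF assms])
  then show ?thesis unfolding Units_def ring_mat_def inv_pair_def using A by auto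
qed

lemma det_nonzero_if_inv_pair:
  fixes A :: "'b::field mat"
  assumes "inv_pair n A B"
  shows "det A \<noteq> 0"
proof -
  have "det A * det B = 1" using assms det_mult[of A n B] unfolding inv_pair_def by simp
  then show ?thesis by auto
qed

lemma minv_eqI:
  assumes AB: "inv_pair n A B"
  shows "minv n A = B"
proof -
  let ?C = "minv n A"
  have "\<exists>C. C \<in> carrier_mat n n \<and> A * C = 1\<^sub>m n \<and> C * A = 1\<^sub>m n"
    using AB unfolding inv_pair_def by blast
  from someI_ex[OF this] have C: "?C \<in> carrier_mat n n" "?C * A = 1\<^sub>m n"
    unfolding minv_def by auto
  have A: "A \<in> carrier_mat n n" and B: "B \<in> carrier_mat n n" and AB1: "A * B = 1\<^sub>m n"
    using AB unfolding inv_pair_def by auto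
  have "?C = ?C * (A * B)" using C AB1 by simp
  also have "\<dots> = (?C * A) * B" using assoc_mult_mat[OF C(1) A B] by simp
  also have "\<dots> = B" using C B by simp
  finally show ?thesis .
qed

lemma conj_set_iff:
  assumes AB: "inv_pair n A B" and S: "S \<subseteq> carrier_mat n n" and g: "g \<in> carrier_mat n n"
  shows "g \<in> conj_set n (minv n A) S \<longleftrightarrow> A * g * B \<in> S"
proof -
  have c: "A \<in> carrier_mat n n" "B \<in> carrier_mat n n" and AB1: "A * B = 1\<^sub>m n" "B * A = 1\<^sub>m n"
    using AB unfolding inv_pair_def by auto
  have m: "minv n A = B" "minv n B = A" using minv_eqI AB inv_pair_sym by blast+
  have cancel: "X * (Y * h * X') * Y' = (X * Y) * h * (X' * Y')"
    if "X \<in> carrier_mat n n" "Y \<in> carrier_mat n n" "X' \<in> carrier_mat n n" "Y' \<in> carrier_mat n n"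
       "h \<in> carrier_mat n n" for X Y X' Y' h
    using that by (simp add: assoc_mult_mat[of _ n n _ n _ n])
  show ?thesis
  proof
    assume "g \<in> conj_set n (minv n A) S"
    then obtain h where h: "h \<in> S" "g = B * h * A" unfolding conj_set_def m by auto
    then have "A * g * B = h" using cancel[of A B A B h] c S AB1 by auto
    then show "A * g * B \<in> S" using h by simp
  next
    assume h: "A * g * B \<in> S"
    have "B * (A * g * B) * A = g" using cancel[of B A B A g] c g AB1 by auto
    then have "g = B * (A * g * B) * A \<and> A * g * B \<in> S" using h by simp
    then show "g \<in> conj_set n (minv n A) S" unfolding conj_set_def m by blast
  qed
qed

section \<open>Triangular, permutation and diagonal matrices\<close>

definition lower_triangular :: "'b::zero mat \<Rightarrow> bool" where
  "lower_triangular A \<longleftrightarrow> upper_triangular (transpose_mat A)"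

lemma lower_triangular_iff:
  "A \<in> carrier_mat n n \<Longrightarrow> lower_triangular A \<longleftrightarrow> (\<forall>i j. i < j \<longrightarrow> j < n \<longrightarrow> A $$ (i,j) = 0)"
  unfolding lower_triangular_def upper_triangular_def by auto

lemma upper_triangular_iff:
  "A \<in> carrier_mat n n \<Longrightarrow> upper_triangular A \<longleftrightarrow> (\<forall>i j. j < i \<longrightarrow> i < n \<longrightarrow> A $$ (i,j) = 0)"
  unfolding upper_triangular_def by auto

lemma unit_upper_triangular_iff:
  assumes "c \<in> carrier_mat n n"
  shows "(\<forall>i<n. \<forall>j<n. (i = j \<longrightarrow> c $$ (i,j) = 1) \<and> (j < i \<longrightarrow> c $$ (i,j) = 0))
    \<longleftrightarrow> upper_triangular c \<and> (\<forall>i<n. c $$ (i,i) = 1)"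
  unfolding upper_triangular_iff[OF assms] by auto

lemma unit_lower_triangular_iff:
  assumes "c \<in> carrier_mat n n"
  shows "(\<forall>i<n. \<forall>j<n. (i = j \<longrightarrow> c $$ (i,j) = 1) \<and> (i < j \<longrightarrow> c $$ (i,j) = 0))
    \<longleftrightarrow> lower_triangular c \<and> (\<forall>i<n. c $$ (i,i) = 1)"
  unfolding lower_triangular_iff[OF assms] by auto

lemma upper_triangular_mult:
  fixes A B :: "'b::comm_ring_1 mat"
  assumes A: "A \<in> carrier_mat n n" and B: "B \<in> carrier_mat n n"
    and uA: "upper_triangular A" and uB: "upper_triangular B"
  shows "upper_triangular (A * B)" and "\<And>i. i < n \<Longrightarrow> (A * B) $$ (i,i) = A $$ (i,i) * B $$ (i,i)"
proof -
  have zA: "A $$ (i,k) = 0" if "k < i" "i < n" for i k using uA that A by (auto simp: upper_triangular_iff)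
  have zB: "B $$ (k,j) = 0" if "j < k" "k < n" for j k using uB that B by (auto simp: upper_triangular_iff)
  have term0: "A $$ (i,k) * B $$ (k,j) = 0" if "k < i \<or> j < k" "i < n" "k < n" for i j k
    using zA zB that by auto
  have "(A * B) $$ (i,j) = 0" if "j < i" "i < n" for i j
  proof -
    have "(A * B) $$ (i,j) = (\<Sum>k<n. A $$ (i,k) * B $$ (k,j))"
      using that by (intro index_mult_mat_sum[OF A B]) auto
    also have "\<dots> = 0" using that by (intro sum.neutral) (auto intro!: term0)
    finally show ?thesis .
  qed
  then show "upper_triangular (A * B)" using A B by (auto simp: upper_triangular_iff)
  show "(A * B) $$ (i,i) = A $$ (i,i) * B $$ (i,i)" if "i < n" for i
  proof -
    have "(\<Sum>k<n. A $$ (i,k) * B $$ (k,i)) = (\<Sum>k\<in>{i}. A $$ (i,k) * B $$ (k,i))"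
      using that by (intro sum.mono_neutral_right) (auto intro!: term0)
    then show ?thesis using index_mult_mat_sum[OF A B that that] by simp
  qed
qed

lemma upper_triangular_diag_nonzero:
  fixes A :: "'b::field mat"
  assumes "inv_pair n A B" "upper_triangular A" "i < n"
  shows "A $$ (i,i) \<noteq> 0"
proof -
  have A: "A \<in> carrier_mat n n" using assms unfolding inv_pair_def by auto
  have "det A = (\<Prod>i = 0 ..< n. A $$ (i,i))"
    using det_upper_triangular[OF assms(2) A] A by (simp add: prod_list_diag_prod)
  then show ?thesis using det_nonzero_if_inv_pair[OF assms(1)] assms(3) by auto
qed

lemma lower_triangular_diag_nonzero:
  fixes A :: "'b::field mat"
  assumes "inv_pair n A B" "lower_triangular A" "i < n"
  shows "A $$ (i,i) \<noteq> 0"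
proof -
  have "inv_pair n (transpose_mat B) (transpose_mat A)"
    using assms(1) unfolding inv_pair_def by (auto simp flip: transpose_mult)
  then have "inv_pair n (transpose_mat A) (transpose_mat B)" by (rule inv_pair_sym)
  moreover have "A \<in> carrier_mat n n" using assms(1) unfolding inv_pair_def by auto
  ultimately show ?thesis
    using upper_triangular_diag_nonzero[of n "transpose_mat A"] assms(2,3)
    unfolding lower_triangular_def by auto
qed

text \<open>Row i of A * B = 1 expresses A(i,i) B(i,j) through entries B(k,j) with k > i, which
  vanish for k > i > j by downward induction on i.\<close>
lemma upper_triangular_inverse:
  fixes A :: "'b::field mat"
  assumes AB: "inv_pair n A B" and uA: "upper_triangular A"
  shows "upper_triangular B"
proof -
  have A: "A \<in> carrier_mat n n" and B: "B \<in> carrier_mat n n" and AB1: "A * B = 1\<^sub>m n"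
    using AB unfolding inv_pair_def by auto
  have "B $$ (i,j) = 0" if "j < i" "i < n" for i j
    using that
  proof (induction "n - i" arbitrary: i rule: less_induct)
    case less
    have "(\<Sum>k<n. A $$ (i,k) * B $$ (k,j)) = 0"
      using index_mult_mat_sum[OF A B, of i j] AB1 less.prems by simp
    moreover have "A $$ (i,k) * B $$ (k,j) = 0" if "k < n" "k \<noteq> i" for k
    proof (cases "k < i")
      case True then show ?thesis using uA A that less.prems by (simp add: upper_triangular_iff)
    next
      case False
      then have "B $$ (k,j) = 0" by (intro less.hyps) (use less.prems that in auto)
      then show ?thesis by simp
    qed
    then have "(\<Sum>k<n. A $$ (i,k) * B $$ (k,j)) = (\<Sum>k\<in>{i}. A $$ (i,k) * B $$ (k,j))"
      by (intro sum.mono_neutral_right) (use less.prems in auto)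
    ultimately show ?case
      using upper_triangular_diag_nonzero[OF AB uA, of i] less.prems by simp
  qed
  then show ?thesis using B by (simp add: upper_triangular_iff)
qed

lemma lower_triangular_inverse:
  fixes A :: "'b::field mat"
  assumes AB: "inv_pair n A B" and lA: "lower_triangular A"
  shows "lower_triangular B"
proof -
  have "inv_pair n (transpose_mat A) (transpose_mat B)"
    using AB unfolding inv_pair_def by (auto simp flip: transpose_mult)
  from upper_triangular_inverse[OF this] lA show ?thesis unfolding lower_triangular_def by simp
qed

lemma perm_mat_carrier[simp]: "perm_mat n \<sigma> \<in> carrier_mat n n"
  unfolding perm_mat_def by simp

lemma perm_mat_mult_left:
  fixes A :: "'b::comm_ring_1 mat"
  assumes p: "\<sigma> permutes {..<n}" and A: "A \<in> carrier_mat n n"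
  shows "perm_mat n \<sigma> * A = mat n n (\<lambda>(i,j). A $$ (inv_into UNIV \<sigma> i, j))"
proof (rule eq_matI)
  fix i j assume "i < dim_row (mat n n (\<lambda>(i,j). A $$ (inv_into UNIV \<sigma> i, j)))"
    and "j < dim_col (mat n n (\<lambda>(i,j). A $$ (inv_into UNIV \<sigma> i, j)))"
  then have i: "i < n" and j: "j < n" by auto
  have "(perm_mat n \<sigma> * A) $$ (i,j) = (\<Sum>k<n. if k = inv_into UNIV \<sigma> i then A $$ (k,j) else 0)"
    unfolding index_mult_mat_sum[OF perm_mat_carrier A i j]
    using i by (intro sum.cong) (auto simp: perm_mat_def permutes_inverses[OF p])
  also have "\<dots> = A $$ (inv_into UNIV \<sigma> i, j)"
    using permutes_in_image[OF permutes_inv[OF p], of i] i by simp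
  finally show "(perm_mat n \<sigma> * A) $$ (i,j) = mat n n (\<lambda>(i,j). A $$ (inv_into UNIV \<sigma> i, j)) $$ (i,j)"
    using i j by simp
qed (use A in \<open>auto simp: perm_mat_def\<close>)

lemma perm_mat_mult_right:
  fixes A :: "'b::comm_ring_1 mat"
  assumes p: "\<sigma> permutes {..<n}" and A: "A \<in> carrier_mat n n"
  shows "A * perm_mat n \<sigma> = mat n n (\<lambda>(i,j). A $$ (i, \<sigma> j))"
proof (rule eq_matI)
  fix i j assume "i < dim_row (mat n n (\<lambda>(i,j). A $$ (i, \<sigma> j)))"
    and "j < dim_col (mat n n (\<lambda>(i,j). A $$ (i, \<sigma> j)))"
  then have i: "i < n" and j: "j < n" by auto
  have "(A * perm_mat n \<sigma>) $$ (i,j) = (\<Sum>k<n. if k = \<sigma> j then A $$ (i,k) else 0)"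
    unfolding index_mult_mat_sum[OF A perm_mat_carrier i j]
    using j by (intro sum.cong) (auto simp: perm_mat_def)
  also have "\<dots> = A $$ (i, \<sigma> j)" using permutes_in_image[OF p, of j] j by simp
  finally show "(A * perm_mat n \<sigma>) $$ (i,j) = mat n n (\<lambda>(i,j). A $$ (i, \<sigma> j)) $$ (i,j)"
    using i j by simp
qed (use A in \<open>auto simp: perm_mat_def\<close>)

lemma inv_pair_perm_mat:
  assumes p: "\<sigma> permutes {..<n}"
  shows "inv_pair n (perm_mat n \<sigma>) (perm_mat n (inv_into UNIV \<sigma>) :: 'b::comm_ring_1 mat)"
proof -
  have pi: "inv_into UNIV \<sigma> permutes {..<n}" using p by (rule permutes_inv)
  have "perm_mat n \<sigma> * perm_mat n (inv_into UNIV \<sigma>) = (1\<^sub>m n :: 'b mat)"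
    unfolding perm_mat_mult_right[OF pi perm_mat_carrier]
    using permutes_in_image[OF pi] by (intro eq_matI) (auto simp: perm_mat_def permutes_inverses[OF p])
  moreover have "perm_mat n (inv_into UNIV \<sigma>) * perm_mat n \<sigma> = (1\<^sub>m n :: 'b mat)"
    unfolding perm_mat_mult_right[OF p perm_mat_carrier]
    using permutes_in_image[OF p] by (intro eq_matI) (auto simp: perm_mat_def permutes_inverses[OF p])
  ultimately show ?thesis unfolding inv_pair_def by simp
qed

lemma perm_mat_conj_entry:
  fixes A :: "'b::comm_ring_1 mat"
  assumes p: "\<sigma> permutes {..<n}" and A: "A \<in> carrier_mat n n" and "a < n" "b < n"
  shows "(perm_mat n \<sigma> * A * perm_mat n (inv_into UNIV \<sigma>)) $$ (\<sigma> a, \<sigma> b) = A $$ (a,b)"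
  using assms permutes_in_image[OF p] permutes_in_image[OF permutes_inv[OF p]]
  by (simp add: perm_mat_mult_left perm_mat_mult_right permutes_inv permutes_inverses[OF p])

lemma all_less_permute:
  assumes "\<sigma> permutes {..<n}"
  shows "(\<forall>i<n. P i) \<longleftrightarrow> (\<forall>a<n. P (\<sigma> a))"
  using permutes_in_image[OF assms] permutes_in_image[OF permutes_inv[OF assms]]
    permutes_inverses[OF assms] by (metis lessThan_iff)

lemma all_less_permute2:
  assumes "\<sigma> permutes {..<n}"
  shows "(\<forall>i<n. \<forall>j<n. P i j) \<longleftrightarrow> (\<forall>a<n. \<forall>b<n. P (\<sigma> a) (\<sigma> b))"
  using permutes_in_image[OF assms] permutes_in_image[OF permutes_inv[OF assms]]
    permutes_inverses[OF assms] by (metis lessThan_iff)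

lemma lower_triangular_perm_conj_iff:
  fixes A :: "'b::comm_ring_1 mat"
  assumes p: "\<pi> permutes {..<n}" and A: "A \<in> carrier_mat n n"
  shows "lower_triangular (perm_mat n \<pi> * A * perm_mat n (inv_into UNIV \<pi>))
    \<longleftrightarrow> (\<forall>a<n. \<forall>b<n. \<pi> a < \<pi> b \<longrightarrow> A $$ (a,b) = 0)"
proof -
  let ?C = "perm_mat n \<pi> * A * perm_mat n (inv_into UNIV \<pi>)"
  have C: "?C \<in> carrier_mat n n"
    by (rule mult_carrier_mat[OF mult_carrier_mat[OF perm_mat_carrier A] perm_mat_carrier])
  have "lower_triangular ?C \<longleftrightarrow> (\<forall>i<n. \<forall>j<n. i < j \<longrightarrow> ?C $$ (i,j) = 0)"
    unfolding lower_triangular_iff[OF C] by auto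
  also have "\<dots> \<longleftrightarrow> (\<forall>a<n. \<forall>b<n. \<pi> a < \<pi> b \<longrightarrow> ?C $$ (\<pi> a, \<pi> b) = 0)"
    by (rule all_less_permute2[OF p, where P = "\<lambda>i j. i < j \<longrightarrow> ?C $$ (i,j) = 0"])
  also have "\<dots> \<longleftrightarrow> (\<forall>a<n. \<forall>b<n. \<pi> a < \<pi> b \<longrightarrow> A $$ (a,b) = 0)"
    using perm_mat_conj_entry[OF p A] by simp
  finally show ?thesis .
qed

lemma inv_pair_mat_diag:
  fixes f :: "nat \<Rightarrow> 'b::field"
  assumes "\<And>i. i < n \<Longrightarrow> f i \<noteq> 0"
  shows "inv_pair n (mat_diag n f) (mat_diag n (\<lambda>i. inverse (f i)))"
proof -
  have "mat_diag n (\<lambda>i. f i * inverse (f i)) = 1\<^sub>m n"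
    "mat_diag n (\<lambda>i. inverse (f i) * f i) = 1\<^sub>m n"
    using assms by (auto simp: mat_diag_def intro!: eq_matI)
  then show ?thesis unfolding inv_pair_def by simp
qed

section \<open>The group L\<close>

definition mod_block :: "nat \<Rightarrow> nat \<Rightarrow> 'b::zero mat \<Rightarrow> bool" where
  "mod_block n d c \<longleftrightarrow> (\<forall>i<n. \<forall>j<n. i mod d \<noteq> j mod d \<longrightarrow> c $$ (i,j) = 0)"

lemma mod_block_mat_diag: "mod_block n d (mat_diag n f)"
  unfolding mod_block_def mat_diag_def by auto

lemma mod_block_mult:
  fixes c c' :: "'b::comm_ring_1 mat"
  assumes c: "c \<in> carrier_mat n n" and c': "c' \<in> carrier_mat n n"
    and "mod_block n d c" "mod_block n d c'"
  shows "mod_block n d (c * c')"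
  unfolding mod_block_def
proof (intro allI impI)
  fix i j assume i: "i < n" and j: "j < n" and ij: "i mod d \<noteq> j mod d"
  have "c $$ (i,k) * c' $$ (k,j) = 0" if "k < n" for k
    using assms(3,4) i j ij that unfolding mod_block_def by (cases "i mod d = k mod d") auto
  then show "(c * c') $$ (i,j) = 0" unfolding index_mult_mat_sum[OF c c' i j] by simp
qed

text \<open>A matrix is block diagonal for the residues mod d iff it commutes with the diagonal
  idempotents projecting onto the residue classes; commuting passes to inverses.\<close>
lemma mod_block_iff_commute:
  fixes c :: "'b::comm_ring_1 mat"
  assumes c: "c \<in> carrier_mat n n"
  shows "mod_block n d c \<longleftrightarrow>
    (\<forall>r. mat_diag n (\<lambda>i. if i mod d = r then 1 else 0) * c = c * mat_diag n (\<lambda>i. if i mod d = r then 1 else 0))"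
  (is "_ \<longleftrightarrow> (\<forall>r. ?E r * c = c * ?E r)")
proof -
  have E: "?E r * c = c * ?E r \<longleftrightarrow>
      (\<forall>i<n. \<forall>j<n. (if i mod d = r then c $$ (i,j) else 0) = (if j mod d = r then c $$ (i,j) else 0))" for r
    using c by (auto simp: mat_diag_mult_left mat_diag_mult_right mat_eq_iff)
  show ?thesis unfolding E mod_block_def
  proof (intro iffI allI impI)
    fix r i j assume "\<forall>i<n. \<forall>j<n. i mod d \<noteq> j mod d \<longrightarrow> c $$ (i,j) = 0" "i < n" "j < n"
    then show "(if i mod d = r then c $$ (i,j) else 0) = (if j mod d = r then c $$ (i,j) else 0)"
      by auto
  next
    fix i j assume all: "\<forall>r. \<forall>i<n. \<forall>j<n.
        (if i mod d = r then c $$ (i,j) else 0) = (if j mod d = r then c $$ (i,j) else 0)"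
      and ij: "i < n" "j < n" "i mod d \<noteq> j mod d"
    have "(if i mod d = i mod d then c $$ (i,j) else 0) = (if j mod d = i mod d then c $$ (i,j) else 0)"
      using all ij(1,2) by blast
    then show "c $$ (i,j) = 0" using ij(3) by simp
  qed
qed

lemma inv_pair_commute:
  fixes c :: "'b::semiring_1 mat"
  assumes cc': "inv_pair n c c'" and E: "E \<in> carrier_mat n n" and comm: "E * c = c * E"
  shows "E * c' = c' * E"
proof -
  have c: "c \<in> carrier_mat n n" "c' \<in> carrier_mat n n" and cc'1: "c * c' = 1\<^sub>m n" "c' * c = 1\<^sub>m n"
    using cc' unfolding inv_pair_def by auto
  have "c' * E = c' * E * (c * c')" using c E cc'1 by simp
  also have "\<dots> = c' * (E * c) * c'" using c E by (simp add: assoc_mult_mat[of _ n n _ n _ n])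
  also have "\<dots> = (c' * c) * E * c'" unfolding comm using c E by (simp add: assoc_mult_mat[of _ n n _ n _ n])
  also have "\<dots> = E * c'" using c E cc'1 by simp
  finally show ?thesis by simp
qed

lemma mod_block_inverse:
  fixes c :: "'b::comm_ring_1 mat"
  assumes cc': "inv_pair n c c'" and "mod_block n d c"
  shows "mod_block n d c'"
proof -
  let ?E = "\<lambda>r. mat_diag n (\<lambda>i. if i mod d = r then 1 else 0) :: 'b mat"
  have c: "c \<in> carrier_mat n n" "c' \<in> carrier_mat n n" using cc' unfolding inv_pair_def by auto
  have "\<forall>r. ?E r * c = c * ?E r" using assms(2) unfolding mod_block_iff_commute[OF c(1)] .
  then have "\<forall>r. ?E r * c' = c' * ?E r"
    using inv_pair_commute[OF cc' mat_diag_dim] by simp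
  then show ?thesis unfolding mod_block_iff_commute[OF c(2)] .
qed

lemma G0_iff: "c \<in> G0 n d \<longleftrightarrow> c \<in> carrier_mat n n \<and> mod_block n d c \<and> (\<exists>c'. inv_pair n c c')"
  unfolding G0_def mod_block_def using invertible_mat_iff_inv_pair[of c n] by auto

lemma G0_carrier: "c \<in> G0 n d \<Longrightarrow> c \<in> carrier_mat n n"
  unfolding G0_def by simp

lemma G0_mult:
  assumes "c \<in> G0 n d" "c' \<in> G0 n d"
  shows "c * c' \<in> G0 n d"
proof -
  obtain b b' where "inv_pair n c b" "inv_pair n c' b'" using assms unfolding G0_iff by blast
  then have "inv_pair n (c * c') (b' * b)" by (rule inv_pair_mult)
  then show ?thesis using assms mod_block_mult[of c n c' d] unfolding G0_iff by auto
qed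

lemma G0_inv_pair:
  assumes "c \<in> G0 n d"
  shows "\<exists>c' \<in> G0 n d. inv_pair n c c'"
proof -
  obtain c' where c': "inv_pair n c c'" using assms unfolding G0_iff by blast
  have "mod_block n d c'" using assms mod_block_inverse[OF c'] unfolding G0_iff by simp
  moreover have "c' \<in> carrier_mat n n" using c' unfolding inv_pair_def by simp
  ultimately have "c' \<in> G0 n d" unfolding G0_iff using inv_pair_sym[OF c'] by blast
  then show ?thesis using c' by blast
qed

lemma mat_diag_in_G0:
  fixes f :: "nat \<Rightarrow> 'a::field"
  assumes "\<And>i. i < n \<Longrightarrow> f i \<noteq> 0"
  shows "mat_diag n f \<in> G0 n d"
proof -
  have "inv_pair n (mat_diag n f) (mat_diag n (\<lambda>i. inverse (f i)))"
    by (rule inv_pair_mat_diag) (rule assms)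
  then show ?thesis unfolding G0_iff using mod_block_mat_diag[of n d f] by auto
qed

lemma int_div_diff:
  assumes "i mod d = j mod d"
  shows "(int i - int j) div int d = int (i div d) - int (j div d)"
proof (cases "d = 0")
  case False
  have "int i = int d * int (i div d) + int (i mod d)" "int j = int d * int (j div d) + int (j mod d)"
    by (simp_all flip: of_nat_mult of_nat_add)
  then have "int i - int j = int d * (int (i div d) - int (j div d))"
    using assms by (simp add: algebra_simps)
  then show ?thesis using False by simp
qed simp

lemma iota_carrier[simp]: "iota n d c \<in> carrier_mat n n"
  unfolding iota_def by simp

lemma iota_dim[simp]: "dim_row (iota n d c) = n" "dim_col (iota n d c) = n"
  unfolding iota_def by simp_all

lemma iota_entry:
  "i < n \<Longrightarrow> j < n \<Longrightarrow> iota n d c $$ (i,j) = (if i mod d = j mod d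
      then fls_const (c $$ (i,j)) * sp (int (i div d) - int (j div d)) else 0)"
  unfolding iota_def by (simp add: int_div_diff)

lemma fls_const_sum: "fls_const (\<Sum>k\<in>A. f k) = (\<Sum>k\<in>A. fls_const (f k))"
  by (induction A rule: infinite_finite_induct) (auto simp: fls_plus_const[symmetric])

lemma iota_mult:
  assumes c: "c \<in> carrier_mat n n" and c': "c' \<in> carrier_mat n n" and b: "mod_block n d c"
  shows "iota n d c * iota n d c' = iota n d (c * c')"
proof (rule eq_matI)
  fix i j assume "i < dim_row (iota n d (c * c'))" "j < dim_col (iota n d (c * c'))"
  then have i: "i < n" and j: "j < n" by (auto simp: iota_def)
  let ?e = "sp (int (i div d) - int (j div d)) :: 'a fls"
  have "iota n d c $$ (i,k) * iota n d c' $$ (k,j)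
      = (if i mod d = j mod d then fls_const (c $$ (i,k) * c' $$ (k,j)) * ?e else 0)" if k: "k < n" for k
  proof (cases "i mod d = k mod d")
    case True
    then show ?thesis using i j k
      by (auto simp: iota_entry sp_mult algebra_simps simp flip: fls_const_mult_const)
  next
    case False
    then show ?thesis using b i j k unfolding mod_block_def by (auto simp: iota_entry)
  qed
  then have "(iota n d c * iota n d c') $$ (i,j)
      = (\<Sum>k<n. if i mod d = j mod d then fls_const (c $$ (i,k) * c' $$ (k,j)) * ?e else 0)"
    unfolding index_mult_mat_sum[OF iota_carrier iota_carrier i j] by (intro sum.cong) auto
  also have "\<dots> = (if i mod d = j mod d then fls_const (\<Sum>k<n. c $$ (i,k) * c' $$ (k,j)) * ?e else 0)"
    by (simp add: fls_const_sum sum_distrib_right)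
  also have "\<dots> = iota n d (c * c') $$ (i,j)"
    using i j by (simp add: iota_entry index_mult_mat_sum[OF c c' i j])
  finally show "(iota n d c * iota n d c') $$ (i,j) = iota n d (c * c') $$ (i,j)" .
qed (auto simp: iota_def)

lemma iota_mult_G0: "c \<in> G0 n d \<Longrightarrow> c' \<in> G0 n d \<Longrightarrow> iota n d c * iota n d c' = iota n d (c * c')"
  by (rule iota_mult) (auto simp: G0_iff)

lemma iota_one: "iota n d (1\<^sub>m n) = 1\<^sub>m n"
  by (rule eq_matI) (auto simp: iota_def)

lemma iota_mat_diag:
  "iota n d (mat_diag n f) = mat n n (\<lambda>(i,j). if i = j then fls_const (f i) else 0)"
  by (rule eq_matI) (auto simp: iota_entry mat_diag_def)

lemma iota_inj:
  assumes "c \<in> carrier_mat n n" "c' \<in> carrier_mat n n" "mod_block n d c" "mod_block n d c'"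
    and "iota n d c = iota n d c'"
  shows "c = c'"
proof (rule eq_matI)
  fix i j assume "i < dim_row c'" "j < dim_col c'"
  then have i: "i < n" and j: "j < n" using assms by auto
  show "c $$ (i,j) = c' $$ (i,j)"
  proof (cases "i mod d = j mod d")
    case True
    let ?e = "int (i div d) - int (j div d)"
    have "fls_nth (iota n d c $$ (i,j)) ?e = fls_nth (iota n d c' $$ (i,j)) ?e"
      using assms(5) by simp
    then show ?thesis using True i j by (simp add: iota_entry fls_nth_const_mult_sp del: fls_mult_const_nth)
  next
    case False
    then show ?thesis using assms i j unfolding mod_block_def by auto
  qed
qed (use assms in auto)

lemma inj_on_iota_G0: "inj_on (iota n d) (G0 n d)"
  by (rule inj_onI, rule iota_inj) (auto simp: G0_iff)

lemma iota_in_image_iff: "M \<in> G0 n d \<Longrightarrow> S \<subseteq> G0 n d \<Longrightarrow> iota n d M \<in> iota n d ` S \<longleftrightarrow> M \<in> S"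
  by (rule inj_on_image_mem_iff[OF inj_on_iota_G0])

lemma inv_pair_iota:
  assumes cc': "inv_pair n c c'" and "mod_block n d c" "mod_block n d c'"
  shows "inv_pair n (iota n d c) (iota n d c')"
proof -
  have c: "c \<in> carrier_mat n n" "c' \<in> carrier_mat n n" and "c * c' = 1\<^sub>m n" "c' * c = 1\<^sub>m n"
    using cc' unfolding inv_pair_def by auto
  then have "iota n d c * iota n d c' = 1\<^sub>m n" "iota n d c' * iota n d c = 1\<^sub>m n"
    using iota_mult[OF c assms(2)] iota_mult[OF c(2,1) assms(3)] by (simp_all add: iota_one)
  then show ?thesis unfolding inv_pair_def by simp
qed

lemma minv_iota_G0:
  assumes "c \<in> G0 n d" "c' \<in> G0 n d" "inv_pair n c c'"
  shows "minv n (iota n d c) = iota n d c'"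
  using assms by (intro minv_eqI inv_pair_iota) (auto simp: G0_iff)

lemma Lgrp_carrier: "Lgrp n d \<subseteq> carrier_mat n n"
  unfolding Lgrp_def by auto

lemma Lgrp_mult:
  assumes "g \<in> Lgrp n d" "h \<in> Lgrp n d"
  shows "g * h \<in> Lgrp n d"
proof -
  obtain c c' where cc': "g = iota n d c" "h = iota n d c'" "c \<in> G0 n d" "c' \<in> G0 n d"
    using assms unfolding Lgrp_def by auto
  then have "g * h = iota n d (c * c')" using iota_mult[of c n c' d] by (simp add: G0_iff)
  then show ?thesis unfolding Lgrp_def using G0_mult[OF cc'(3,4)] by blast
qed

lemma Lgrp_inv_pair:
  assumes "g \<in> Lgrp n d"
  shows "\<exists>g' \<in> Lgrp n d. inv_pair n g g'"
proof -
  obtain c where c: "g = iota n d c" "c \<in> G0 n d" using assms unfolding Lgrp_def by auto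
  then obtain c' where c': "c' \<in> G0 n d" "inv_pair n c c'" using G0_inv_pair by blast
  have "inv_pair n g (iota n d c')"
    unfolding c(1) using inv_pair_iota[OF c'(2)] c(2) c'(1) by (simp add: G0_iff)
  moreover have "iota n d c' \<in> Lgrp n d" unfolding Lgrp_def using c'(1) by blast
  ultimately show ?thesis by blast
qed

section \<open>The torus and the unipotent and Borel subgroups of L\<close>

lemma Tk_eq: "Tk n = {iota n d (mat_diag n f) | f. \<forall>i<n. f i \<noteq> 0}"
  unfolding Tk_def iota_mat_diag by simp

lemma TkE:
  assumes "t \<in> Tk n"
  obtains f where "t = iota n d (mat_diag n f)" "\<forall>i<n. f i \<noteq> 0"
  using assms unfolding Tk_eq[where d = d] by blast

lemma Tk_subset_Lgrp: "Tk n \<subseteq> Lgrp n d"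
proof
  fix t assume "t \<in> Tk n"
  then obtain f where t: "t = iota n d (mat_diag n f)" and f: "\<forall>i<n. f i \<noteq> 0"
    unfolding Tk_eq[where d = d] by blast
  have "mat_diag n f \<in> G0 n d" using f by (intro mat_diag_in_G0) auto
  then show "t \<in> Lgrp n d" unfolding Lgrp_def t by (rule imageI)
qed

lemma UL_eq: "UL n d = iota n d ` {c \<in> G0 n d. upper_triangular c \<and> (\<forall>i<n. c $$ (i,i) = 1)}"
proof -
  have eq: "{c \<in> G0 n d. \<forall>i<n. \<forall>j<n. (i = j \<longrightarrow> c $$ (i,j) = 1) \<and> (j < i \<longrightarrow> c $$ (i,j) = 0)}
      = {c \<in> G0 n d. upper_triangular c \<and> (\<forall>i<n. c $$ (i,i) = 1)}"
    using unit_upper_triangular_iff[OF G0_carrier] by blast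
  show ?thesis unfolding UL_def eq by (rule refl)
qed

lemma ULE:
  assumes "x \<in> UL n d"
  obtains X where "x = iota n d X" "X \<in> G0 n d" "upper_triangular X" "\<forall>i<n. X $$ (i,i) = 1"
  using assms unfolding UL_eq by blast

lemma UL_subset_Lgrp: "UL n d \<subseteq> Lgrp n d"
  unfolding UL_def Lgrp_def by (intro image_mono Collect_restrict)

lemma iota_in_UL_iff:
  assumes M: "M \<in> G0 n d"
  shows "iota n d M \<in> UL n d \<longleftrightarrow> upper_triangular M \<and> (\<forall>i<n. M $$ (i,i) = 1)"
  unfolding UL_eq iota_in_image_iff[OF M Collect_restrict] using M by simp

lemma UL_mult:
  assumes "x \<in> UL n d" "y \<in> UL n d"
  shows "x * y \<in> UL n d"
proof -
  obtain X Y where x: "x = iota n d X" "X \<in> G0 n d" "upper_triangular X" "\<forall>i<n. X $$ (i,i) = 1"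
    and y: "y = iota n d Y" "Y \<in> G0 n d" "upper_triangular Y" "\<forall>i<n. Y $$ (i,i) = 1"
    using assms by (elim ULE)
  note tri = upper_triangular_mult[OF G0_carrier[OF x(2)] G0_carrier[OF y(2)] x(3) y(3)]
  have "upper_triangular (X * Y) \<and> (\<forall>i<n. (X * Y) $$ (i,i) = 1)"
    using tri x(4) y(4) by simp
  then show ?thesis
    unfolding x(1) y(1) iota_mult_G0[OF x(2) y(2)] iota_in_UL_iff[OF G0_mult[OF x(2) y(2)]] .
qed

lemma UL_inv_pair:
  assumes "x \<in> UL n d"
  obtains x' where "x' \<in> UL n d" "inv_pair n x x'"
proof -
  obtain X where x: "x = iota n d X" "X \<in> G0 n d" "upper_triangular X" "\<forall>i<n. X $$ (i,i) = 1"
    using assms by (elim ULE)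
  obtain X' where X': "X' \<in> G0 n d" "inv_pair n X X'" using G0_inv_pair[OF x(2)] by blast
  have up: "upper_triangular X'" using upper_triangular_inverse[OF X'(2) x(3)] .
  have "X' * X = 1\<^sub>m n" using X'(2) unfolding inv_pair_def by simp
  then have "X' $$ (i,i) = 1" if "i < n" for i
    using upper_triangular_mult(2)[OF G0_carrier[OF X'(1)] G0_carrier[OF x(2)] up x(3) that] x(4) that
    by simp
  then have "iota n d X' \<in> UL n d" using iota_in_UL_iff[OF X'(1)] up by blast
  moreover have "inv_pair n x (iota n d X')"
    unfolding x(1) using inv_pair_iota[OF X'(2)] x(2) X'(1) by (simp add: G0_iff)
  ultimately show ?thesis by (rule that)
qed

lemma Tk_conj_UL:
  assumes t: "t \<in> Tk n" and y: "y \<in> UL n d"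
  shows "minv n t * y * t \<in> UL n d"
proof -
  obtain f where tf: "t = iota n d (mat_diag n f)" and f: "\<forall>i<n. f i \<noteq> 0" using t by (elim TkE)
  obtain Y where Y: "y = iota n d Y" "Y \<in> G0 n d" "upper_triangular Y" "\<forall>i<n. Y $$ (i,i) = 1"
    using y by (elim ULE)
  let ?D = "mat_diag n f" and ?D' = "mat_diag n (\<lambda>i. inverse (f i))"
  have D: "?D \<in> G0 n d" "?D' \<in> G0 n d" using f by (auto intro!: mat_diag_in_G0)
  have "minv n t = iota n d ?D'"
    unfolding tf using minv_iota_G0[OF D] inv_pair_mat_diag f by blast
  then have eq: "minv n t * y * t = iota n d (?D' * Y * ?D)"
    unfolding tf Y(1) using D Y(2) by (simp add: iota_mult_G0 G0_mult)
  have Yc: "Y \<in> carrier_mat n n" using G0_carrier[OF Y(2)] .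
  have "?D' * Y * ?D = ?D' * (Y * ?D)" using Yc by (simp add: assoc_mult_mat[of _ n n _ n _ n])
  also have "Y * ?D = mat n n (\<lambda>(i,j). Y $$ (i,j) * f j)" by (rule mat_diag_mult_right[OF Yc])
  also have "?D' * \<dots> = mat n n (\<lambda>(i,j). inverse (f i) * (Y $$ (i,j) * f j))"
    by (subst mat_diag_mult_left[of _ n n]) (auto intro!: eq_matI)
  finally have entry: "(?D' * Y * ?D) $$ (i,j) = inverse (f i) * Y $$ (i,j) * f j"
    if "i < n" "j < n" for i j
    using that by simp
  have G: "?D' * Y * ?D \<in> G0 n d" using D Y(2) by (simp add: G0_mult)
  have "upper_triangular (?D' * Y * ?D) \<and> (\<forall>i<n. (?D' * Y * ?D) $$ (i,i) = 1)"
    using entry Y(3,4) f Yc by (simp add: upper_triangular_iff[OF G0_carrier[OF G]] upper_triangular_iff[OF Yc])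
  then show ?thesis unfolding eq iota_in_UL_iff[OF G] .
qed

lemma iota_in_ULm_iff:
  assumes M: "M \<in> G0 n d"
  shows "iota n d M \<in> ULm n d \<longleftrightarrow> lower_triangular M \<and> (\<forall>i<n. M $$ (i,i) = 1)"
  unfolding ULm_def iota_in_image_iff[OF M Collect_restrict]
  using M unit_lower_triangular_iff[OF G0_carrier[OF M]] by simp

lemma ULm_carrier: "ULm n d \<subseteq> carrier_mat n n"
  unfolding ULm_def by auto

text \<open>M is its diagonal times a unipotent lower triangular matrix.\<close>
lemma iota_lower_triangular_in_BLm:
  assumes M: "M \<in> G0 n d" "lower_triangular M"
  shows "iota n d M \<in> BLm n d"
proof -
  obtain M' where "inv_pair n M M'" using M(1) unfolding G0_iff by blast
  then have nz: "M $$ (i,i) \<noteq> 0" if "i < n" for i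
    using lower_triangular_diag_nonzero M(2) that by blast
  have Mc: "M \<in> carrier_mat n n" using G0_carrier[OF M(1)] .
  let ?D = "mat_diag n (\<lambda>i. M $$ (i,i))" and ?Z = "mat_diag n (\<lambda>i. inverse (M $$ (i,i))) * M"
  have Zc: "?Z \<in> carrier_mat n n" by (rule mult_carrier_mat[OF mat_diag_dim Mc])
  have Ze: "?Z $$ (i,j) = inverse (M $$ (i,i)) * M $$ (i,j)" if "i < n" "j < n" for i j
    using that by (simp add: mat_diag_mult_left[OF Mc])
  have ZG: "?Z \<in> G0 n d" using G0_mult[OF mat_diag_in_G0 M(1)] nz by simp
  moreover have "lower_triangular ?Z \<and> (\<forall>i<n. ?Z $$ (i,i) = 1)"
    using Ze nz M(2) Mc Zc by (simp add: lower_triangular_iff[of _ n])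
  ultimately have v: "iota n d ?Z \<in> ULm n d" using iota_in_ULm_iff by blast
  have t: "iota n d ?D \<in> Tk n" unfolding Tk_eq[where d = d] using nz by blast
  have "?D * ?Z = M"
    using nz Mc by (auto simp: mat_diag_mult_left[OF Zc] Ze intro!: eq_matI)
  then have "iota n d M = iota n d ?D * iota n d ?Z"
    using iota_mult[OF mat_diag_dim Zc mod_block_mat_diag] by simp
  then show ?thesis unfolding BLm_def using t v by blast
qed

lemma BLm_eq: "BLm n d = iota n d ` {M \<in> G0 n d. lower_triangular M}"
proof (intro equalityI subsetI)
  fix x assume "x \<in> BLm n d"
  then obtain t v where x: "x = t * v" and tT: "t \<in> Tk n" and vU: "v \<in> ULm n d"
    unfolding BLm_def by blast
  from tT obtain f where t: "t = iota n d (mat_diag n f)" and f: "\<forall>i<n. f i \<noteq> 0"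
    unfolding Tk_eq[where d = d] by blast
  from vU obtain Z where v: "v = iota n d Z" and Z: "Z \<in> G0 n d"
    unfolding ULm_def by blast
  have Zl: "lower_triangular Z" using iota_in_ULm_iff[OF Z] vU v by blast
  have Zc: "Z \<in> carrier_mat n n" using G0_carrier[OF Z] .
  have "x = iota n d (mat_diag n f * Z)"
    unfolding x t v by (rule iota_mult[OF mat_diag_dim Zc mod_block_mat_diag])
  moreover have "mat_diag n f * Z \<in> G0 n d" using G0_mult[OF mat_diag_in_G0 Z] f by blast
  moreover have "lower_triangular (mat_diag n f * Z)"
    using Zl Zc by (simp add: lower_triangular_iff[of _ n] mat_diag_mult_left[OF Zc])
  ultimately show "x \<in> iota n d ` {M \<in> G0 n d. lower_triangular M}" by blast
next
  fix x assume "x \<in> iota n d ` {M \<in> G0 n d. lower_triangular M}"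
  then show "x \<in> BLm n d" using iota_lower_triangular_in_BLm by blast
qed

lemma BLm_carrier: "BLm n d \<subseteq> carrier_mat n n"
  unfolding BLm_eq by auto

lemma iota_in_BLm_iff:
  assumes "M \<in> G0 n d"
  shows "iota n d M \<in> BLm n d \<longleftrightarrow> lower_triangular M"
  unfolding BLm_eq iota_in_image_iff[OF assms Collect_restrict] using assms by simp

lemma WLE:
  fixes w :: "'a::field fls mat"
  assumes "w \<in> WL n d"
  obtains \<pi> where "\<pi> permutes {..<n}" "w = iota n d (perm_mat n \<pi>)"
    "(perm_mat n \<pi> :: 'a mat) \<in> G0 n d"
  using assms unfolding WL_def by blast

lemma WL_subset_Lgrp: "WL n d \<subseteq> Lgrp n d"
  unfolding WL_def Lgrp_def by (rule image_mono) (rule Int_lower2)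

text \<open>Conjugation by w permutes rows and columns simultaneously, so it moves the diagonal of
  t y into the diagonal; hence only the unipotent factor y decides lower triangularity.\<close>
lemma WL_conj_Tk_UL_in_BLm_iff:
  fixes w t y :: "'a::field fls mat"
  assumes w: "w \<in> WL n d" and t: "t \<in> Tk n" and y: "y \<in> UL n d"
  shows "w * (t * y) * minv n w \<in> BLm n d \<longleftrightarrow> w * y * minv n w \<in> ULm n d"
proof -
  obtain \<pi> where p: "\<pi> permutes {..<n}" and wP: "w = iota n d (perm_mat n \<pi>)"
    and P: "(perm_mat n \<pi> :: 'a mat) \<in> G0 n d" using w by (elim WLE)
  let ?P = "perm_mat n \<pi> :: 'a mat" and ?P' = "perm_mat n (inv_into UNIV \<pi>) :: 'a mat"
  have PP': "inv_pair n ?P ?P'" by (rule inv_pair_perm_mat[OF p])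
  have "mod_block n d ?P" using P unfolding G0_iff by simp
  then have "mod_block n d ?P'" by (rule mod_block_inverse[OF PP'])
  then have P': "?P' \<in> G0 n d" unfolding G0_iff using inv_pair_sym[OF PP'] perm_mat_carrier by blast
  have mw: "minv n w = iota n d ?P'" unfolding wP by (rule minv_iota_G0[OF P P' PP'])
  obtain f where tf: "t = iota n d (mat_diag n f)" and f: "\<forall>i<n. f i \<noteq> 0" using t by (elim TkE)
  obtain Y where Y: "y = iota n d Y" "Y \<in> G0 n d" "upper_triangular Y" "\<forall>i<n. Y $$ (i,i) = 1"
    using y by (elim ULE)
  have D: "mat_diag n f \<in> G0 n d" using f by (auto intro!: mat_diag_in_G0)
  have Yc: "Y \<in> carrier_mat n n" using G0_carrier[OF Y(2)] .
  have DYc: "mat_diag n f * Y \<in> carrier_mat n n" by (rule mult_carrier_mat[OF mat_diag_dim Yc])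
  have "w * (t * y) * minv n w \<in> BLm n d \<longleftrightarrow> lower_triangular (?P * (mat_diag n f * Y) * ?P')"
    unfolding mw unfolding wP tf Y(1) using P P' D Y(2) by (simp add: iota_mult_G0 G0_mult iota_in_BLm_iff)
  also have "\<dots> \<longleftrightarrow> (\<forall>a<n. \<forall>b<n. \<pi> a < \<pi> b \<longrightarrow> Y $$ (a,b) = 0)"
    unfolding lower_triangular_perm_conj_iff[OF p DYc] using f by (simp add: mat_diag_mult_left[OF Yc])
  also have "\<dots> \<longleftrightarrow> lower_triangular (?P * Y * ?P')"
    by (rule lower_triangular_perm_conj_iff[OF p Yc, symmetric])
  also have "\<dots> \<longleftrightarrow> lower_triangular (?P * Y * ?P') \<and> (\<forall>i<n. (?P * Y * ?P') $$ (i,i) = 1)"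
    using all_less_permute[OF p, where P = "\<lambda>i. (?P * Y * ?P') $$ (i,i) = 1"]
      perm_mat_conj_entry[OF p Yc] Y(4) by simp
  also have "\<dots> \<longleftrightarrow> w * y * minv n w \<in> ULm n d"
    unfolding mw unfolding wP Y(1) using P P' Y(2) by (simp add: iota_mult_G0 G0_mult iota_in_ULm_iff)
  finally show ?thesis .
qed

lemma Tk_UL_conj_BLm_iff:
  fixes w u t v :: "'a::field fls mat"
  assumes w: "w \<in> WL n d" and u: "u \<in> UL n d" and t: "t \<in> Tk n" and v: "v \<in> UL n d"
  shows "t * v \<in> conj_set n (minv n (w * u)) (BLm n d)
    \<longleftrightarrow> minv n t * u * t * v * minv n u \<in> UL n d \<inter> conj_set n (minv n w) (ULm n d)"
proof -
  obtain u' where u': "u' \<in> UL n d" "inv_pair n u u'" by (rule UL_inv_pair[OF u])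
  obtain t' where t': "inv_pair n t t'"
    using Lgrp_inv_pair[OF subsetD[OF Tk_subset_Lgrp[where d = d] t]] by blast
  obtain w' where w': "inv_pair n w w'" using Lgrp_inv_pair[OF subsetD[OF WL_subset_Lgrp w]] by blast
  have mt: "minv n t = t'" and mu: "minv n u = u'" and mw: "minv n w = w'"
    using minv_eqI[OF t'] minv_eqI[OF u'(2)] minv_eqI[OF w'] .
  define y where "y = minv n t * u * t * v * minv n u"
  have yUL: "y \<in> UL n d"
    unfolding y_def mu by (rule UL_mult[OF UL_mult[OF Tk_conj_UL[OF t u] v] u'(1)])
  have c: "w \<in> carrier_mat n n" "w' \<in> carrier_mat n n" "u \<in> carrier_mat n n" "u' \<in> carrier_mat n n"
    "t \<in> carrier_mat n n" "t' \<in> carrier_mat n n" and tt': "t * t' = 1\<^sub>m n"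
    using t' u'(2) w' unfolding inv_pair_def by auto
  have vc: "v \<in> carrier_mat n n" and yc: "y \<in> carrier_mat n n"
    using subsetD[OF UL_subset_Lgrp v] subsetD[OF UL_subset_Lgrp yUL] Lgrp_carrier by auto
  have "t * y = (t * t') * (u * (t * (v * u')))"
    unfolding y_def mt mu using c vc by (simp add: assoc_mult_mat[of _ n n _ n _ n])
  then have conj_eq: "w * u * (t * v) * (u' * w') = w * (t * y) * w'"
    using c vc tt' by (simp add: assoc_mult_mat[of _ n n _ n _ n])
  have "t * v \<in> conj_set n (minv n (w * u)) (BLm n d) \<longleftrightarrow> w * u * (t * v) * (u' * w') \<in> BLm n d"
    using c vc by (intro conj_set_iff inv_pair_mult[OF w' u'(2)] BLm_carrier) simp
  also have "\<dots> \<longleftrightarrow> w * y * w' \<in> ULm n d"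
    unfolding conj_eq unfolding mw[symmetric] by (rule WL_conj_Tk_UL_in_BLm_iff[OF w t yUL])
  also have "\<dots> \<longleftrightarrow> y \<in> conj_set n (minv n w) (ULm n d)"
    by (rule conj_set_iff[OF w' ULm_carrier yc, symmetric])
  finally show ?thesis using yUL unfolding y_def by blast
qed

section \<open>Conjugation by the affine Weyl group element\<close>

lemma diag_s_eq_mat_diag: "diag_s n lam = mat_diag n (\<lambda>i. sp (lam i))"
  unfolding diag_s_def mat_diag_def by (auto intro!: eq_matI)

lemma inv_pair_Wtil:
  assumes "\<sigma> permutes {..<n}"
  shows "inv_pair n (perm_mat n \<sigma> * diag_s n lam)
    (diag_s n (\<lambda>i. - lam i) * perm_mat n (inv_into UNIV \<sigma>) :: 'a::field fls mat)"
proof -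
  have "inv_pair n (diag_s n lam) (diag_s n (\<lambda>i. - lam i) :: 'a fls mat)"
    unfolding inv_pair_def diag_s_eq_mat_diag by (simp add: sp_mult)
  then show ?thesis by (rule inv_pair_mult[OF inv_pair_perm_mat[OF assms]])
qed

lemma Wtil_conj_entry:
  fixes g :: "'a::field fls mat" and lam :: "nat \<Rightarrow> int"
  assumes p: "\<sigma> permutes {..<n}" and g: "g \<in> carrier_mat n n" and ab: "a < n" "b < n"
  defines "wt \<equiv> perm_mat n \<sigma> * diag_s n lam"
  shows "(wt * g * minv n wt) $$ (\<sigma> a, \<sigma> b) = sp (lam a) * g $$ (a,b) * sp (- lam b)"
proof -
  let ?P = "perm_mat n \<sigma> :: 'a fls mat" and ?D = "diag_s n lam :: 'a fls mat"
    and ?D' = "diag_s n (\<lambda>i. - lam i) :: 'a fls mat"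
  have c: "?P \<in> carrier_mat n n" "?D \<in> carrier_mat n n" "?D' \<in> carrier_mat n n"
    "perm_mat n (inv_into UNIV \<sigma>) \<in> carrier_mat n n"
    by (simp_all add: diag_s_def)
  have "wt * g * minv n wt = ?P * (?D * g * ?D') * perm_mat n (inv_into UNIV \<sigma>)"
    unfolding wt_def minv_eqI[OF inv_pair_Wtil[OF p]] using c g
    by (simp add: assoc_mult_mat[of _ n n _ n _ n])
  also have "?D * g * ?D' = mat n n (\<lambda>(i,j). sp (lam i) * g $$ (i,j) * sp (- lam j))"
    unfolding diag_s_eq_mat_diag mat_diag_mult_left[OF g]
    by (subst mat_diag_mult_right[of _ n]) (auto intro!: eq_matI)
  finally show ?thesis
    using perm_mat_conj_entry[OF p _ ab, of "mat n n (\<lambda>(i,j). sp (lam i) * g $$ (i,j) * sp (- lam j))"] ab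
    by simp
qed

lemma IwahD:
  assumes "g \<in> Iwah n" "i < n" "j < n"
  shows "in_kpow (g $$ (i,j))" "j < i \<Longrightarrow> fls_nth (g $$ (i,j)) 0 = 0"
  using assms unfolding Iwah_def GL_R_def by auto

lemma IminusD:
  assumes "g \<in> Iminus n" "i < n" "j < n"
  shows "in_kinv (g $$ (i,j))" "i < j \<Longrightarrow> fls_nth (g $$ (i,j)) 0 = 0"
  using assms unfolding Iminus_def GL_R_def by auto

lemma IminusI:
  assumes gh: "inv_pair n g h"
    and "\<forall>i<n. \<forall>j<n. in_kinv (g $$ (i,j))" "\<forall>i<n. \<forall>j<n. in_kinv (h $$ (i,j))"
    and "\<forall>i<n. \<forall>j<n. i < j \<longrightarrow> fls_nth (g $$ (i,j)) 0 = 0"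
  shows "g \<in> Iminus n"
proof -
  have "g \<in> GL_R n in_kinv"
    unfolding GL_R_def mem_Collect_eq using gh assms(2,3) unfolding inv_pair_def
    by (intro conjI bexI[of _ h]) simp_all
  then show ?thesis unfolding Iminus_def using assms(4) by simp
qed

lemma Iminus_carrier: "Iminus n \<subseteq> carrier_mat n n"
  unfolding Iminus_def GL_R_def by auto

lemma in_kinv_const_mult_sp: "in_kinv (fls_const c * sp e :: 'a::field fls) \<longleftrightarrow> c = 0 \<or> e \<le> 0"
  unfolding in_kinv_def fls_nth_const_mult_sp by auto

text \<open>Conjugating the (a,b) entry c s^(a div d - b div d) of an element of L by
  wt = P_sigma diag(s^lam) puts c s^(h a - h b) at (sigma a, sigma b), where h is:\<close>
definition wt_height :: "nat \<Rightarrow> (nat \<Rightarrow> int) \<Rightarrow> nat \<Rightarrow> int" where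
  "wt_height d lam a = int (a div d) + lam a"

definition lex_before :: "(nat \<Rightarrow> int) \<Rightarrow> (nat \<Rightarrow> nat) \<Rightarrow> nat \<Rightarrow> nat \<Rightarrow> bool" where
  "lex_before h \<sigma> a b \<longleftrightarrow> h b < h a \<or> (h a = h b \<and> \<sigma> a < \<sigma> b)"

lemma lex_before_trans: "lex_before h \<sigma> a b \<Longrightarrow> lex_before h \<sigma> b c \<Longrightarrow> lex_before h \<sigma> a c"
  unfolding lex_before_def by auto

definition wt_ordered :: "nat \<Rightarrow> nat \<Rightarrow> (nat \<Rightarrow> nat) \<Rightarrow> (nat \<Rightarrow> int) \<Rightarrow> bool" where
  "wt_ordered n d \<sigma> lam \<longleftrightarrow>
    (\<forall>a b. a < b \<longrightarrow> b < n \<longrightarrow> a mod d = b mod d \<longrightarrow> lex_before (wt_height d lam) \<sigma> a b)"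

lemma wt_orderedI:
  assumes step: "\<And>i. i + d < n \<Longrightarrow> lex_before (wt_height d lam) \<sigma> i (i + d)"
  shows "wt_ordered n d \<sigma> lam"
  unfolding wt_ordered_def
proof (intro allI impI)
  fix a b assume ab: "a < b" "b < n" "a mod d = b mod d"
  have "d dvd b - a" using ab mod_eq_dvd_iff_nat[of a b d] by simp
  then obtain k' where k': "b - a = d * k'" by (rule dvdE)
  with ab obtain k where "k' = Suc k" by (cases k') auto
  then have k: "b = a + d * Suc k" using k' ab by simp
  have "lex_before (wt_height d lam) \<sigma> a (a + d * Suc k)" if "a + d * Suc k < n" for k
    using that
  proof (induction k)
    case 0 then show ?case using step[of a] by simp
  next
    case (Suc k)
    have "lex_before (wt_height d lam) \<sigma> (a + d * Suc k) (a + d * Suc k + d)"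
      using step[of "a + d * Suc k"] Suc.prems by (simp add: algebra_simps)
    with Suc show ?case by (auto simp: algebra_simps intro: lex_before_trans)
  qed
  then show "lex_before (wt_height d lam) \<sigma> a b" using k ab by simp
qed

lemma wt_orderedD:
  "wt_ordered n d \<sigma> lam \<Longrightarrow> a < b \<Longrightarrow> b < n \<Longrightarrow> a mod d = b mod d \<Longrightarrow> lex_before (wt_height d lam) \<sigma> a b"
  unfolding wt_ordered_def by blast

text \<open>wt conjugates 1 + s^-1 E(i,i+d) to 1 + s^e E(sigma i, sigma (i+d)), e the height difference;
  this lies in I only if e \<ge> 0, and for e = 0 only if it is above the diagonal.\<close>
lemma Wtil_positive_step:
  fixes lam :: "nat \<Rightarrow> int"
  assumes p: "\<sigma> permutes {..<n}" and d: "0 < d" and i: "i + d < n"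
    and pos: "aff_pos_after n (perm_mat n \<sigma> * diag_s n lam :: 'a::field fls mat) i (i + d) (-1)"
  shows "lex_before (wt_height d lam) \<sigma> i (i + d)"
proof -
  let ?wt = "perm_mat n \<sigma> * diag_s n lam :: 'a fls mat"
  let ?g = "root_elem n i (i + d) (-1) (1::'a)"
  let ?e = "wt_height d lam i - wt_height d lam (i + d)"
  have gc: "?g \<in> carrier_mat n n" unfolding root_elem_def by simp
  have "?g \<in> root_sub n i (i + d) (-1)" unfolding root_sub_def by auto
  then have "?wt * ?g * minv n ?wt \<in> Iwah n"
    using pos unfolding aff_pos_after_def conj_set_def by blast
  moreover have "(?wt * ?g * minv n ?wt) $$ (\<sigma> i, \<sigma> (i + d)) = sp ?e"
  proof -
    have "(i + d) div d = i div d + 1" using d by simp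
    moreover have "?g $$ (i, i + d) = sp (-1)" using i d unfolding root_elem_def by simp
    ultimately show ?thesis
      using Wtil_conj_entry[OF p gc, of i "i + d" lam] i by (simp add: sp_mult wt_height_def algebra_simps)
  qed
  moreover have "\<sigma> i < n" "\<sigma> (i + d) < n" using permutes_in_image[OF p] i by auto
  ultimately have kpow: "in_kpow (sp ?e :: 'a fls)"
    and const: "\<sigma> (i + d) < \<sigma> i \<Longrightarrow> fls_nth (sp ?e :: 'a fls) 0 = 0"
    using IwahD by metis+
  have "0 \<le> ?e" using kpow unfolding in_kpow_def fls_nth_sp by (metis linorder_not_le one_neq_zero)
  moreover have "\<sigma> i \<noteq> \<sigma> (i + d)" using permutes_inj[OF p] d by (simp add: inj_eq)
  moreover have "?e = 0 \<longrightarrow> \<not> \<sigma> (i + d) < \<sigma> i" using const by (auto simp: fls_nth_sp)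
  ultimately show ?thesis unfolding lex_before_def by auto
qed

lemma Wtil_ordered:
  fixes lam :: "nat \<Rightarrow> int"
  assumes d: "0 < d" and p: "\<sigma> permutes {..<n}"
    and pos: "\<forall>i. i + d < n \<longrightarrow> aff_pos_after n (perm_mat n \<sigma> * diag_s n lam :: 'a::field fls mat) i (i + d) (-1)"
  shows "wt_ordered n d \<sigma> lam"
proof (rule wt_orderedI)
  fix i assume "i + d < n"
  with pos show "lex_before (wt_height d lam) \<sigma> i (i + d)" by (intro Wtil_positive_step[OF p d]) auto
qed

lemma Wtil_conj_iota_entry:
  fixes lam :: "nat \<Rightarrow> int" and M :: "'a::field mat"
  assumes p: "\<sigma> permutes {..<n}" and ab: "a < n" "b < n"
  defines "wt \<equiv> perm_mat n \<sigma> * diag_s n lam"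
  shows "(wt * iota n d M * minv n wt) $$ (\<sigma> a, \<sigma> b) = (if a mod d = b mod d
      then fls_const (M $$ (a,b)) * sp (wt_height d lam a - wt_height d lam b) else 0)"
  unfolding wt_def Wtil_conj_entry[OF p iota_carrier ab] using ab
  by (auto simp: iota_entry sp_mult wt_height_def algebra_simps)

text \<open>A lower triangular N has entries N(a,b) with b \<le> a only; for b < a the ordering puts
  the conjugated entry at a nonpositive power of s, and at a power zero only below the diagonal.\<close>
lemma Wtil_conj_lower_entries:
  fixes lam :: "nat \<Rightarrow> int" and N :: "'a::field mat"
  assumes p: "\<sigma> permutes {..<n}"
    and ord: "wt_ordered n d \<sigma> lam"
    and N: "N \<in> carrier_mat n n" "lower_triangular N"
  defines "h \<equiv> perm_mat n \<sigma> * diag_s n lam * iota n d N * minv n (perm_mat n \<sigma> * diag_s n lam)"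
  shows "\<forall>i<n. \<forall>j<n. in_kinv (h $$ (i,j)) \<and> (i < j \<longrightarrow> fls_nth (h $$ (i,j)) 0 = 0)"
proof (subst all_less_permute2[OF p], intro allI impI)
  fix a b assume ab: "a < n" "b < n"
  show "in_kinv (h $$ (\<sigma> a, \<sigma> b)) \<and> (\<sigma> a < \<sigma> b \<longrightarrow> fls_nth (h $$ (\<sigma> a, \<sigma> b)) 0 = 0)"
  proof (cases "a mod d = b mod d \<and> N $$ (a,b) \<noteq> 0")
    case False
    then have "h $$ (\<sigma> a, \<sigma> b) = 0" unfolding h_def Wtil_conj_iota_entry[OF p ab] by auto
    then show ?thesis unfolding in_kinv_def by simp
  next
    case True
    then have "\<not> a < b" using N ab lower_triangular_iff[of N n] by auto
    then have "a = b \<or> b < a" by auto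
    then have "a = b \<or> lex_before (wt_height d lam) \<sigma> b a" using wt_orderedD[OF ord, of b a] True ab by auto
    then show ?thesis unfolding h_def Wtil_conj_iota_entry[OF p ab]
      using True by (auto simp: in_kinv_const_mult_sp fls_nth_const_mult_sp fls_nth_sp lex_before_def)
  qed
qed

lemma lower_triangular_if_Wtil_conj_in_Iminus:
  fixes lam :: "nat \<Rightarrow> int" and M :: "'a::field mat"
  assumes p: "\<sigma> permutes {..<n}"
    and ord: "wt_ordered n d \<sigma> lam"
    and M: "M \<in> G0 n d"
    and h: "perm_mat n \<sigma> * diag_s n lam * iota n d M * minv n (perm_mat n \<sigma> * diag_s n lam) \<in> Iminus n"
      (is "?h \<in> _")
  shows "lower_triangular M"
proof -
  have "M $$ (a,b) = 0" if ab: "a < b" "b < n" for a b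
  proof (cases "a mod d = b mod d")
    case True
    let ?e = "wt_height d lam a - wt_height d lam b"
    have a: "a < n" using ab by simp
    have entry: "?h $$ (\<sigma> a, \<sigma> b) = fls_const (M $$ (a,b)) * sp ?e"
      unfolding Wtil_conj_iota_entry[OF p a ab(2)] using True by simp
    have "\<sigma> a < n" "\<sigma> b < n" using permutes_in_image[OF p] a ab by auto
    then have "in_kinv (?h $$ (\<sigma> a, \<sigma> b))" "\<sigma> a < \<sigma> b \<longrightarrow> fls_nth (?h $$ (\<sigma> a, \<sigma> b)) 0 = 0"
      using IminusD[OF h] by auto
    then show ?thesis using wt_orderedD[OF ord ab True]
      unfolding entry in_kinv_const_mult_sp lex_before_def by (auto simp: fls_nth_const_mult_sp)
  next
    case False
    then show ?thesis using M ab unfolding G0_iff mod_block_def by auto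
  qed
  then show ?thesis using G0_carrier[OF M] by (simp add: lower_triangular_iff[of _ n])
qed

lemma Wtil_conj_iota_in_Iminus_iff:
  fixes lam :: "nat \<Rightarrow> int" and M :: "'a::field mat"
  assumes p: "\<sigma> permutes {..<n}"
    and ord: "wt_ordered n d \<sigma> lam"
    and M: "M \<in> G0 n d"
  defines "wt \<equiv> perm_mat n \<sigma> * diag_s n lam"
  shows "wt * iota n d M * minv n wt \<in> Iminus n \<longleftrightarrow> lower_triangular M"
proof
  show "lower_triangular M" if "wt * iota n d M * minv n wt \<in> Iminus n"
    using lower_triangular_if_Wtil_conj_in_Iminus[OF p ord M] that unfolding wt_def .
next
  assume lower: "lower_triangular M"
  obtain M' where M': "M' \<in> G0 n d" "inv_pair n M M'" using G0_inv_pair[OF M] by blast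
  have lower': "lower_triangular M'" by (rule lower_triangular_inverse[OF M'(2) lower])
  have wt: "inv_pair n wt (minv n wt)"
    unfolding wt_def minv_eqI[OF inv_pair_Wtil[OF p]] by (rule inv_pair_Wtil[OF p])
  have iM: "inv_pair n (iota n d M) (iota n d M')"
    using inv_pair_iota[OF M'(2)] M M'(1) by (simp add: G0_iff)
  have "inv_pair n (wt * iota n d M * minv n wt) (wt * iota n d M' * minv n wt)"
    using inv_pair_mult[OF inv_pair_mult[OF wt iM] inv_pair_sym[OF wt]]
      wt[unfolded inv_pair_def] by (simp add: assoc_mult_mat[of _ n n _ n _ n])
  then show "wt * iota n d M * minv n wt \<in> Iminus n"
    using IminusI Wtil_conj_lower_entries[OF p ord G0_carrier[OF M] lower]
      Wtil_conj_lower_entries[OF p ord G0_carrier[OF M'(1)] lower']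
    unfolding wt_def by blast
qed

lemma Lgrp_Wtil_conj_in_Iminus_iff:
  fixes wt g :: "'a::field fls mat"
  assumes d: "0 < d" and wt: "wt \<in> Wtil n"
    and pos: "\<forall>i. i + d < n \<longrightarrow> aff_pos_after n wt i (i + d) (-1)" and g: "g \<in> Lgrp n d"
  shows "wt * g * minv n wt \<in> Iminus n \<longleftrightarrow> g \<in> BLm n d"
proof -
  obtain \<sigma> lam where p: "\<sigma> permutes {..<n}" and wtd: "wt = perm_mat n \<sigma> * diag_s n lam"
    using wt unfolding Wtil_def by auto
  obtain M where gM: "g = iota n d M" and M: "M \<in> G0 n d" using g unfolding Lgrp_def by auto
  have "wt * g * minv n wt \<in> Iminus n \<longleftrightarrow> lower_triangular M"
    unfolding gM wtd by (rule Wtil_conj_iota_in_Iminus_iff[OF p Wtil_ordered[OF d p pos[unfolded wtd]] M])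
  also have "\<dots> \<longleftrightarrow> g \<in> BLm n d" unfolding gM by (rule iota_in_BLm_iff[OF M, symmetric])
  finally show ?thesis .
qed

lemma Lgrp_conj_Iminus_iff_conj_BLm:
  fixes wt l g :: "'a::field fls mat"
  assumes d: "0 < d" and wt: "wt \<in> Wtil n"
    and pos: "\<forall>i. i + d < n \<longrightarrow> aff_pos_after n wt i (i + d) (-1)"
    and l: "l \<in> Lgrp n d" and g: "g \<in> Lgrp n d"
  shows "g \<in> conj_set n (minv n (wt * l)) (Iminus n) \<longleftrightarrow> g \<in> conj_set n (minv n l) (BLm n d)"
proof -
  obtain \<sigma> lam where p: "\<sigma> permutes {..<n}" and wtd: "wt = perm_mat n \<sigma> * diag_s n lam"
    using wt unfolding Wtil_def by auto
  have wt': "inv_pair n wt (minv n wt)"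
    unfolding wtd minv_eqI[OF inv_pair_Wtil[OF p]] by (rule inv_pair_Wtil[OF p])
  obtain l' where l': "l' \<in> Lgrp n d" "inv_pair n l l'" using Lgrp_inv_pair[OF l] by blast
  have c: "wt \<in> carrier_mat n n" "minv n wt \<in> carrier_mat n n" "l \<in> carrier_mat n n"
    "l' \<in> carrier_mat n n" "g \<in> carrier_mat n n"
    using wt' l'(2) g Lgrp_carrier unfolding inv_pair_def by auto
  have "wt * l * g * (l' * minv n wt) = wt * (l * g * l') * minv n wt"
    using c by (simp add: assoc_mult_mat[of _ n n _ n _ n])
  then have "g \<in> conj_set n (minv n (wt * l)) (Iminus n) \<longleftrightarrow> wt * (l * g * l') * minv n wt \<in> Iminus n"
    using conj_set_iff[OF inv_pair_mult[OF wt' l'(2)] Iminus_carrier c(5)] by simp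
  also have "\<dots> \<longleftrightarrow> l * g * l' \<in> BLm n d"
    by (rule Lgrp_Wtil_conj_in_Iminus_iff[OF d wt pos Lgrp_mult[OF Lgrp_mult[OF l g] l'(1)]])
  also have "\<dots> \<longleftrightarrow> g \<in> conj_set n (minv n l) (BLm n d)"
    by (rule conj_set_iff[OF l'(2) BLm_carrier c(5), symmetric])
  finally show ?thesis .
qed

section \<open>The Borel subgroup B_phi\<close>

lemma Bphi0_iff:
  "c \<in> Bphi0 n d \<longleftrightarrow> c \<in> G0 n d \<and> upper_triangular c \<and>
    (\<forall>i<n. \<forall>j<n. (i < d \<or> j < d) \<longrightarrow> c $$ (i,j) = (if i = j then 1 else 0))"
proof -
  have "c \<in> G0 n d \<Longrightarrow> upper_triangular c \<longleftrightarrow> (\<forall>i<n. \<forall>j<n. j < i \<longrightarrow> c $$ (i,j) = 0)"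
    using upper_triangular_iff[OF G0_carrier, of c n d] by auto
  then show ?thesis unfolding Bphi0_def by auto
qed

lemma Bphi0_mult:
  assumes "c \<in> Bphi0 n d" "c' \<in> Bphi0 n d"
  shows "c * c' \<in> Bphi0 n d"
proof -
  have G: "c \<in> G0 n d" "c' \<in> G0 n d" and up: "upper_triangular c" "upper_triangular c'"
    and id: "\<forall>i<n. \<forall>j<n. (i < d \<or> j < d) \<longrightarrow> c $$ (i,j) = (if i = j then 1 else 0)"
      "\<forall>i<n. \<forall>j<n. (i < d \<or> j < d) \<longrightarrow> c' $$ (i,j) = (if i = j then 1 else 0)"
    using assms unfolding Bphi0_iff by auto
  note cc = G0_carrier[OF G(1)] G0_carrier[OF G(2)]
  have "(c * c') $$ (i,j) = (if i = j then 1 else 0)" if ij: "i < n" "j < n" "i < d \<or> j < d" for i j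
  proof (cases "i < d")
    case True
    have "(c * c') $$ (i,j) = (\<Sum>k<n. if k = i then c' $$ (k,j) else 0)"
      unfolding index_mult_mat_sum[OF cc ij(1,2)] using id(1) True ij by (intro sum.cong) auto
    then show ?thesis using id(2) True ij by simp
  next
    case False
    then have "j < d" using ij by simp
    have "(c * c') $$ (i,j) = (\<Sum>k<n. if k = j then c $$ (i,k) else 0)"
      unfolding index_mult_mat_sum[OF cc ij(1,2)] using id(2) \<open>j < d\<close> ij by (intro sum.cong) auto
    then show ?thesis using id(1) \<open>j < d\<close> ij by simp
  qed
  then show ?thesis
    unfolding Bphi0_iff using G0_mult[OF G] upper_triangular_mult(1)[OF cc up] by blast
qed

lemma Bphi0_mat_diag:
  fixes f :: "nat \<Rightarrow> 'a::field"
  assumes "\<forall>i<n. f i \<noteq> 0" "\<forall>i<n. i < d \<longrightarrow> f i = 1"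
  shows "mat_diag n f \<in> Bphi0 n d"
  unfolding Bphi0_iff using assms mat_diag_in_G0[of n f d]
  by (auto simp: upper_triangular_def mat_diag_def)

lemma Bphi0_diag_nonzero:
  assumes "c \<in> Bphi0 n d" "i < n"
  shows "c $$ (i,i) \<noteq> 0"
proof -
  obtain c' where "inv_pair n c c'" using assms(1) unfolding Bphi0_iff G0_iff by blast
  moreover have "upper_triangular c" using assms(1) unfolding Bphi0_iff by blast
  ultimately show ?thesis using assms(2) by (rule upper_triangular_diag_nonzero)
qed

text \<open>Divide each row of an element of B_phi by its diagonal entry.\<close>
lemma Bphi_eq_Tphi_Uphi: "Bphi n d = {t * v | t v. t \<in> Tphi n d \<and> v \<in> Uphi n d}"
proof (intro equalityI subsetI)
  fix z assume "z \<in> Bphi n d"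
  then obtain C where z: "z = iota n d C" and C: "C \<in> Bphi0 n d" unfolding Bphi_def by auto
  have CG: "C \<in> G0 n d" and Cc: "C \<in> carrier_mat n n" using C G0_carrier unfolding Bphi0_iff by auto
  define f where "f i = C $$ (i,i)" for i
  have f: "\<forall>i<n. f i \<noteq> 0" using Bphi0_diag_nonzero[OF C] unfolding f_def by blast
  have f1: "\<forall>i<n. i < d \<longrightarrow> f i = 1" using C unfolding Bphi0_iff f_def by auto
  let ?D = "mat_diag n f" and ?D' = "mat_diag n (\<lambda>i. inverse (f i))"
  define V where "V = ?D' * C"
  have D: "?D \<in> Bphi0 n d" "?D' \<in> Bphi0 n d"
    using Bphi0_mat_diag[of n f d] Bphi0_mat_diag[of n "\<lambda>i. inverse (f i)" d] f f1 by auto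
  have V: "V \<in> Bphi0 n d" unfolding V_def by (rule Bphi0_mult[OF D(2) C])
  have V1: "\<forall>i<n. V $$ (i,i) = 1" using f unfolding V_def f_def by (simp add: mat_diag_mult_left[OF Cc])
  have "inv_pair n ?D ?D'" using f by (intro inv_pair_mat_diag) auto
  then have DD': "?D * ?D' = 1\<^sub>m n" unfolding inv_pair_def by simp
  moreover have "?D * V = (?D * ?D') * C"
    unfolding V_def by (rule assoc_mult_mat[OF mat_diag_dim mat_diag_dim Cc, symmetric])
  ultimately have "?D * V = C" using Cc by simp
  then have "z = iota n d ?D * iota n d V"
    unfolding z using iota_mult_G0[of ?D n d V] D(1) V by (simp add: Bphi0_iff)
  moreover have "iota n d ?D \<in> Tphi n d" unfolding Tphi_def using D(1) by (auto simp: mat_diag_def)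
  moreover have "iota n d V \<in> Uphi n d" unfolding Uphi_def using V V1 by blast
  ultimately show "z \<in> {t * v | t v. t \<in> Tphi n d \<and> v \<in> Uphi n d}" by blast
next
  fix z assume "z \<in> {t * v | t v. t \<in> Tphi n d \<and> v \<in> Uphi n d}"
  then obtain T V where z: "z = iota n d T * iota n d V" and "T \<in> Bphi0 n d" "V \<in> Bphi0 n d"
    unfolding Tphi_def Uphi_def by blast
  then have "z = iota n d (T * V)" "T * V \<in> Bphi0 n d"
    using iota_mult_G0[of T n d V] Bphi0_mult by (auto simp: Bphi0_iff)
  then show "z \<in> Bphi n d" unfolding Bphi_def by blast
qed

lemma Bphi_subset_Lgrp: "Bphi n d \<subseteq> Lgrp n d"
  unfolding Bphi_def Lgrp_def by (rule image_mono) (auto simp: Bphi0_iff)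

lemma Tphi_subset_Tk: "Tphi n d \<subseteq> Tk n"
proof
  fix t assume "t \<in> Tphi n d"
  then obtain T where t: "t = iota n d T" and T: "T \<in> Bphi0 n d" "\<forall>i<n. \<forall>j<n. i \<noteq> j \<longrightarrow> T $$ (i,j) = 0"
    unfolding Tphi_def by blast
  have "T = mat_diag n (\<lambda>i. T $$ (i,i))"
    using T G0_carrier[of T n d] by (auto simp: Bphi0_iff mat_diag_def intro!: eq_matI)
  then have "t = iota n d (mat_diag n (\<lambda>i. T $$ (i,i)))" unfolding t by (rule arg_cong)
  then show "t \<in> Tk n"
    unfolding Tk_eq[where d = d] using Bphi0_diag_nonzero[OF T(1)] by blast
qed

lemma Uphi_subset_UL: "Uphi n d \<subseteq> UL n d"
  unfolding Uphi_def UL_eq by (rule image_mono) (auto simp: Bphi0_iff)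

lemma Ups_subset_UL: "Ups n d \<subseteq> UL n d"
proof
  fix u assume "u \<in> Ups n d"
  then obtain U where u: "u = iota n d U" and Uc: "U \<in> carrier_mat n n"
    and U: "\<forall>i<n. \<forall>j<n. (i = j \<longrightarrow> U $$ (i,j) = 1) \<and>
      (i \<noteq> j \<and> U $$ (i,j) \<noteq> 0 \<longrightarrow> i < d \<and> i + d \<le> j \<and> i mod d = j mod d)"
    unfolding Ups_def by blast
  have "U $$ (i,j) = 0" if "j < i" "i < n" for i j
    using U[rule_format, of i j] that by auto
  then have up: "upper_triangular U" using Uc by (simp add: upper_triangular_iff[OF Uc])
  have "det U = 1"
    using det_upper_triangular[OF up Uc] U Uc by (simp add: prod_list_diag_prod)
  then obtain U' where "inv_pair n U U'" using inv_pair_if_det_nonzero[OF Uc] by auto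
  moreover have "mod_block n d U" using U unfolding mod_block_def by auto
  ultimately have "U \<in> G0 n d" using Uc unfolding G0_iff by blast
  moreover have "\<forall>i<n. U $$ (i,i) = 1" using U by blast
  ultimately show "u \<in> UL n d" unfolding u using iota_in_UL_iff up by blast
qed

theorem lemma10p4:
  fixes n d :: nat and wt w u :: "'a::field fls mat"
  assumes "1 \<le> d" and "d \<le> n"
    and "wt \<in> Wtil n"
    and "\<forall>i. i + d < n \<longrightarrow> aff_pos_after n wt i (i + d) (-1)"
    and "w \<in> WL n d" and "u \<in> Ups n d"
  defines "l \<equiv> w * u"
  defines "x \<equiv> wt * l"
  shows "Bphi n d \<inter> conj_set n (minv n x) (Iminus n)
           = Bphi n d \<inter> conj_set n (minv n l) (BLm n d)
       \<and> Bphi n d \<inter> conj_set n (minv n l) (BLm n d)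
           = {t * v | t v. t \<in> Tphi n d \<and> v \<in> Uphi n d \<and>
                (minv n t * u * t) * v * minv n u \<in> UL n d \<inter> conj_set n (minv n w) (ULm n d)}"
proof -
  have d: "0 < d" using assms(1) by simp
  have u: "u \<in> UL n d" using assms(6) Ups_subset_UL by blast
  have l: "l \<in> Lgrp n d"
    unfolding l_def using assms(5) u WL_subset_Lgrp UL_subset_Lgrp by (blast intro: Lgrp_mult)
  have "z \<in> conj_set n (minv n x) (Iminus n) \<longleftrightarrow> z \<in> conj_set n (minv n l) (BLm n d)"
    if "z \<in> Bphi n d" for z
    unfolding x_def using Lgrp_conj_Iminus_iff_conj_BLm[OF d assms(3,4) l] that Bphi_subset_Lgrp by blast
  moreover have "z \<in> conj_set n (minv n l) (BLm n d) \<longleftrightarrow>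
      minv n t * u * t * v * minv n u \<in> UL n d \<inter> conj_set n (minv n w) (ULm n d)"
    if "z = t * v" "t \<in> Tphi n d" "v \<in> Uphi n d" for z t v
    unfolding that l_def
    using Tk_UL_conj_BLm_iff[OF assms(5) u] that Tphi_subset_Tk Uphi_subset_UL by blast
  ultimately show ?thesis unfolding Bphi_eq_Tphi_Uphi by blast
qed

end
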